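(* Let $P\subset\mathbb{R}^2\times\{0\}\subset\mathbb{R}^3$ be a Reuleaux polygon of width $1$ with vertices $p_1,\dots,p_n$, so that $P=\bigcap_{i=1}^nB(p_i,1)\cap\{z=0\}$. Let $\bar P=\bigcap_{i=1}^nB(p_i,1)\subset\mathbb{R}^3$ and $P^+=\bar P\cap\{z\ge 0\}$. Then (i) the diameter of $P^+$ is $1$; and (ii) for every point $x\in\partial P^+\cap\{z>0\}$ there is a point $y$ on the boundary of the Reuleaux polygon $P$ (in the plane $z=0$) with $d(x,y)=1$.
   Context: $B(p,1)$ is the closed unit ball in $\mathbb{R}^3$ centered at $p$; $z$ denotes the third coordinate; $d$ is Euclidean distance. A Reuleaux polygon of width $1$ is a planar convex set of constant width $1$ of the form $\bigcap_{i=1}^n D(p_i,1)$ (closed unit disks), where $n\ge 3$ is odd and the points $p_1,\dots,p_n$ are exactly its vertices (corner points of its boundary); its boundary consists of unit-radius circular arcs centered at the vertices. *)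

theory Defs
  imports "HOL-Analysis.Analysis"
begin

definition constant_width :: "real \<Rightarrow> (real^2) set \<Rightarrow> bool" where
  "constant_width w K \<longleftrightarrow> K \<noteq> {} \<and> bounded K \<and>
     (\<forall>u::real^2. norm u = 1 \<longrightarrow> (SUP x\<in>K. u \<bullet> x) - (INF x\<in>K. u \<bullet> x) = w)"

definition corner_point :: "(real^2) set \<Rightarrow> real^2 \<Rightarrow> bool" where
  "corner_point K x \<longleftrightarrow> x \<in> frontier K \<and>
     (\<exists>u v::real^2. norm u = 1 \<and> norm v = 1 \<and> u \<noteq> v \<and>
        (\<forall>y\<in>K. u \<bullet> y \<le> u \<bullet> x) \<and> (\<forall>y\<in>K. v \<bullet> y \<le> v \<bullet> x))"

definition reuleaux_polygon :: "(real^2) set \<Rightarrow> (real^2) set \<Rightarrow> bool" where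
  "reuleaux_polygon V P \<longleftrightarrow> finite V \<and> odd (card V) \<and> card V \<ge> 3 \<and>
     P = (\<Inter>p\<in>V. cball p 1) \<and> convex P \<and> constant_width 1 P \<and>
     V = {x. corner_point P x}"

definition emb :: "real^2 \<Rightarrow> real^3" where
  "emb p = vector [p$1, p$2, 0]"

end

theory Submission
  imports Defs
begin

text \<open>Write \<open>h\<close> for the height of a point \<open>x \<in> P\<^sup>+\<close>. Every vertex of \<open>P\<close> lies within
  \<open>\<surd>(1 - h\<^sup>2)\<close> of the projection \<open>x'\<close> of \<open>x\<close> to the plane, and in an intersection of unit
  balls of diameter \<open>1\<close> this forces all of \<open>P\<close> into the disk of radius \<open>\<surd>(1 - h\<^sup>2)\<close>
  around \<open>x'\<close>. Hence a point \<open>y \<in> P\<^sup>+\<close> of height \<open>k \<le> h\<close> satisfies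
  \<open>d(x,y)\<^sup>2 \<le> 1 - h\<^sup>2 + (h - k)\<^sup>2 \<le> 1\<close>, while two opposite points of \<open>P\<close> already have
  distance \<open>1\<close>. A boundary point of \<open>P\<^sup>+\<close> above the plane lies on one of the
  finitely many spheres bounding \<open>P\<close>, i.e. at distance \<open>1\<close> from a vertex, and vertices are
  boundary points of \<open>P\<close>.\<close>

lemma constant_width_dist_le:
  assumes cw: "constant_width w K" and a: "a \<in> K" and b: "b \<in> K"
  shows "dist a b \<le> w"
proof -
  obtain u :: "real^2" where nu: "norm u = 1" and u: "u \<bullet> (a - b) = norm (a - b)"
  proof (cases "a = b")
    case True
    then show ?thesis using that[of "axis 1 1"] by simp
  next
    case False
    then show ?thesis
      using that[of "(1 / norm (a - b)) *\<^sub>R (a - b)"]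
      by (simp add: power2_norm_eq_inner[symmetric] power2_eq_square)
  qed
  have bd: "bounded K" and w: "(SUP x\<in>K. u \<bullet> x) - (INF x\<in>K. u \<bullet> x) = w"
    using cw nu unfolding constant_width_def by auto
  have "bounded ((\<lambda>x. u \<bullet> x) ` K)"
    using bd by (intro bounded_linear_image bounded_linear_inner_right)
  then have "u \<bullet> a \<le> (SUP x\<in>K. u \<bullet> x)" and "(INF x\<in>K. u \<bullet> x) \<le> u \<bullet> b"
    using a b by (auto intro: cSUP_upper cINF_lower bounded_imp_bdd_above bounded_imp_bdd_below)
  then show ?thesis using u w by (simp add: dist_norm inner_diff_right)
qed

lemma constant_width_ex_dist_ge:
  assumes cw: "constant_width w K" and "compact K"
  obtains a b where "a \<in> K" "b \<in> K" "w \<le> dist a b"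
proof -
  define u :: "real^2" where "u = axis 1 1"
  have nu: "norm u = 1" unfolding u_def by simp
  have "K \<noteq> {}" and w: "(SUP x\<in>K. u \<bullet> x) - (INF x\<in>K. u \<bullet> x) = w"
    using cw nu unfolding constant_width_def by auto
  moreover have cont: "continuous_on K (\<lambda>x. u \<bullet> x)" by (intro continuous_intros)
  ultimately obtain a b where a: "a \<in> K" "\<forall>y\<in>K. u \<bullet> y \<le> u \<bullet> a"
    and b: "b \<in> K" "\<forall>y\<in>K. u \<bullet> b \<le> u \<bullet> y"
    using continuous_attains_sup[OF \<open>compact K\<close>] continuous_attains_inf[OF \<open>compact K\<close>]
    by blast
  have "(SUP x\<in>K. u \<bullet> x) = u \<bullet> a" using a by (intro cSup_eq_maximum) auto
  moreover have "(INF x\<in>K. u \<bullet> x) = u \<bullet> b" using b by (intro cInf_eq_minimum) auto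
  ultimately have "u \<bullet> (a - b) = w" using w by (simp add: inner_diff_right)
  moreover have "u \<bullet> (a - b) \<le> norm u * norm (a - b)" by (rule norm_cauchy_schwarz)
  ultimately show ?thesis using that a b nu by (simp add: dist_norm)
qed

text \<open>The point \<open>c\<close> at distance \<open>R - r\<close> behind \<open>x\<close>, seen from \<open>y\<close>, still lies in every
  ball, and \<open>d(c,y) = d(x,y) + R - r\<close>; so the diameter bound gives \<open>d(x,y) \<le> r\<close>.\<close>

lemma Inter_cball_dist_le_centre_radius:
  fixes x y :: "'a::real_inner"
  assumes diam: "\<forall>a\<in>P. \<forall>b\<in>P. dist a b \<le> R"
    and P: "P = (\<Inter>p\<in>V. cball p R)" and "x \<in> P" and "y \<in> P"
    and "0 \<le> r" and "r \<le> R" and x_close: "\<forall>p\<in>V. dist x p \<le> r"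
  shows "dist x y \<le> r"
proof (cases "y = x")
  case True then show ?thesis using \<open>0 \<le> r\<close> by simp
next
  case False
  define d where "d = norm (y - x)"
  define u where "u = (1/d) *\<^sub>R (y - x)"
  define c where "c = x - (R - r) *\<^sub>R u"
  have "d > 0" using False d_def by simp
  have nu: "norm u = 1" using \<open>d > 0\<close> unfolding u_def d_def by simp
  have "c \<in> P" unfolding P
  proof
    fix p assume "p \<in> V"
    have "dist p c \<le> dist p x + dist x c" by (rule dist_triangle)
    also have "dist x c = R - r" unfolding c_def dist_norm using nu \<open>r \<le> R\<close> by simp
    moreover have "dist p x \<le> r" using x_close \<open>p \<in> V\<close> by (simp add: dist_commute)
    ultimately show "c \<in> cball p R" by simp
  qed
  have "y - x = d *\<^sub>R u" unfolding u_def using \<open>d > 0\<close> by simp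
  then have "y - c = (d + (R - r)) *\<^sub>R u"
    unfolding c_def by (simp add: algebra_simps)
  then have "dist c y = d + (R - r)"
    using nu \<open>d > 0\<close> \<open>r \<le> R\<close> by (simp add: dist_norm norm_minus_commute[of c y])
  moreover have "dist c y \<le> R" using diam \<open>c \<in> P\<close> \<open>y \<in> P\<close> by blast
  ultimately show ?thesis unfolding d_def by (simp add: dist_norm norm_minus_commute)
qed

lemma frontier_Inter_cball_Int_on_sphere:
  fixes c :: "'i \<Rightarrow> 'a::metric_space"
  assumes "finite I" and "closed S" and x: "x \<in> frontier ((\<Inter>i\<in>I. cball (c i) r) \<inter> S)"
    and "x \<in> interior S"
  shows "\<exists>i\<in>I. dist (c i) x = r"
proof (rule ccontr)
  let ?A = "(\<Inter>i\<in>I. cball (c i) r) \<inter> S"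
  let ?U = "(\<Inter>i\<in>I. ball (c i) r) \<inter> interior S"
  assume "\<not> ?thesis"
  moreover have "closed ?A" using \<open>closed S\<close> by (intro closed_Int closed_INT) auto
  then have "x \<in> ?A" using x frontier_subset_closed by blast
  ultimately have "x \<in> ?U" using \<open>x \<in> interior S\<close> by force
  moreover have "open ?U" using \<open>finite I\<close> by auto
  moreover have "?U \<subseteq> ?A" using interior_subset by fastforce
  ultimately have "x \<in> interior ?A" by (blast intro: interiorI)
  then show False using x by (simp add: frontier_def)
qed

definition plane_proj :: "real^3 \<Rightarrow> real^2" where
  "plane_proj x = vector [x$1, x$2]"

lemma plane_proj_emb [simp]: "plane_proj (emb p) = p"
  unfolding plane_proj_def emb_def by (simp add: vec_eq_iff forall_2)

lemma emb_nth_3 [simp]: "emb p $ 3 = 0"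
  unfolding emb_def by simp

lemma dist_power2_plane_proj:
  "(dist x y)\<^sup>2 = (dist (plane_proj x) (plane_proj y))\<^sup>2 + (x$3 - y$3)\<^sup>2"
  unfolding dist_vec_def L2_set_def plane_proj_def
  by (simp add: sum_3 sum_2 dist_real_def power2_abs)

lemma dist_emb_emb [simp]: "dist (emb a) (emb b) = dist a b"
  using dist_power2_plane_proj[of "emb a" "emb b"] by (simp add: power2_eq_iff_nonneg)

lemma dist_emb_le_1_iff:
  "dist x (emb p) \<le> 1 \<longleftrightarrow> (dist (plane_proj x) p)\<^sup>2 \<le> 1 - (x$3)\<^sup>2"
proof -
  have "dist x (emb p) \<le> 1 \<longleftrightarrow> (dist x (emb p))\<^sup>2 \<le> 1"
    by (simp add: power_le_one_iff)
  then show ?thesis using dist_power2_plane_proj[of x "emb p"] by (simp add: le_diff_eq)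
qed

lemma dist_le_1_if_plane_proj_close:
  assumes "0 \<le> y$3" "y$3 \<le> x$3"
    and "(dist (plane_proj x) (plane_proj y))\<^sup>2 \<le> 1 - (x$3)\<^sup>2"
  shows "dist x y \<le> 1"
proof -
  have "(dist x y)\<^sup>2 \<le> 1 - (x$3)\<^sup>2 + (x$3 - y$3)\<^sup>2"
    using assms(3) dist_power2_plane_proj[of x y] by simp
  also have "\<dots> = 1 - y$3 * (2 * x$3 - y$3)" by (simp add: power2_eq_square algebra_simps)
  also have "\<dots> \<le> 1" using assms(1,2) by simp
  finally show ?thesis by (simp add: power_le_one_iff)
qed

lemma plane_proj_mem_Inter_cball:
  assumes "\<forall>p\<in>V. dist z (emb p) \<le> 1"
  shows "plane_proj z \<in> (\<Inter>p\<in>V. cball p 1)"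
proof -
  have "(dist (plane_proj z) p)\<^sup>2 \<le> 1" if "p \<in> V" for p
    using assms \<open>p \<in> V\<close> unfolding dist_emb_le_1_iff by (smt (verit) zero_le_power2)
  then show ?thesis by (auto simp: dist_commute power_le_one_iff)
qed

lemma upper_lift_dist_le_1:
  fixes V :: "(real^2) set"
  assumes V: "V \<noteq> {}" and P: "P = (\<Inter>p\<in>V. cball p 1)"
    and diam: "\<forall>a\<in>P. \<forall>b\<in>P. dist a b \<le> 1"
    and x: "0 \<le> x$3" "\<forall>p\<in>V. dist x (emb p) \<le> 1"
    and y: "0 \<le> y$3" "\<forall>p\<in>V. dist y (emb p) \<le> 1"
  shows "dist x y \<le> 1"
proof -
  have below_case: "dist x y \<le> 1"
    if "0 \<le> y$3" "y$3 \<le> x$3" and x: "\<forall>p\<in>V. dist x (emb p) \<le> 1"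
      and y: "\<forall>p\<in>V. dist y (emb p) \<le> 1" for x y
  proof -
    define r where "r = sqrt (1 - (x$3)\<^sup>2)"
    have x_close: "\<forall>p\<in>V. dist (plane_proj x) p \<le> r"
      using x unfolding r_def dist_emb_le_1_iff by (auto intro: real_le_rsqrt)
    obtain p where "p \<in> V" using V by blast
    then have "(x$3)\<^sup>2 \<le> 1" using x unfolding dist_emb_le_1_iff by (smt (verit) zero_le_power2)
    then have r: "0 \<le> r" "r \<le> 1" "r\<^sup>2 = 1 - (x$3)\<^sup>2" unfolding r_def by auto
    have "dist (plane_proj x) (plane_proj y) \<le> r"
      using Inter_cball_dist_le_centre_radius[OF diam P _ _ r(1,2) x_close]
        plane_proj_mem_Inter_cball[OF x] plane_proj_mem_Inter_cball[OF y] P by blast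
    then have "(dist (plane_proj x) (plane_proj y))\<^sup>2 \<le> 1 - (x$3)\<^sup>2"
      using r by (metis power_mono zero_le_dist)
    then show ?thesis using dist_le_1_if_plane_proj_close that(1,2) by blast
  qed
  show ?thesis
  proof (cases "y$3 \<le> x$3")
    case True
    then show ?thesis using below_case x y by blast
  next
    case False
    then show ?thesis using below_case[of x y] x y by (simp add: dist_commute)
  qed
qed

theorem lemma1:
  fixes V P :: "(real^2) set"
  assumes "reuleaux_polygon V P"
  defines "Pbar \<equiv> (\<Inter>p\<in>V. cball (emb p) (1::real))"
  defines "Pplus \<equiv> Pbar \<inter> {x::real^3. x$3 \<ge> 0}"
  shows "diameter Pplus = 1 \<and>
    (\<forall>x\<in>frontier Pplus. x$3 > 0 \<longrightarrow> (\<exists>y\<in>frontier P. dist x (emb y) = 1))"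
proof -
  have "finite V" and "card V \<ge> 3" and P: "P = (\<Inter>p\<in>V. cball p 1)"
    and cw: "constant_width 1 P" and V: "V = {x. corner_point P x}"
    using assms(1) unfolding reuleaux_polygon_def by blast+
  have "V \<noteq> {}" using \<open>card V \<ge> 3\<close> by auto
  have diam_P: "\<forall>a\<in>P. \<forall>b\<in>P. dist a b \<le> 1" using constant_width_dist_le[OF cw] by blast
  have Pplus: "x \<in> Pplus \<longleftrightarrow> 0 \<le> x$3 \<and> (\<forall>p\<in>V. dist x (emb p) \<le> 1)" for x
    unfolding Pplus_def Pbar_def by (auto simp: dist_commute)
  have "dist x y \<le> 1" if "x \<in> Pplus" "y \<in> Pplus" for x y
    using upper_lift_dist_le_1[OF \<open>V \<noteq> {}\<close> P diam_P] that unfolding Pplus by blast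
  then have "diameter Pplus \<le> 1" by (intro diameter_le) (simp_all add: dist_norm)
  moreover have "1 \<le> diameter Pplus"
  proof -
    have "compact P"
      using cw unfolding constant_width_def P by (simp add: compact_eq_bounded_closed closed_INT)
    then obtain a b where "a \<in> P" "b \<in> P" "1 \<le> dist (emb a) (emb b)"
      using constant_width_ex_dist_ge[OF cw] by auto
    moreover have "emb a \<in> Pplus" "emb b \<in> Pplus"
      using \<open>a \<in> P\<close> \<open>b \<in> P\<close> unfolding Pplus P by (auto simp: dist_commute)
    moreover obtain p where "p \<in> V" using \<open>V \<noteq> {}\<close> by blast
    then have "Pplus \<subseteq> cball (emb p) 1" unfolding Pplus_def Pbar_def by blast
    then have "bounded Pplus" using bounded_subset bounded_cball by blast
    ultimately show ?thesis using diameter_bounded_bound order_trans by blast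
  qed
  moreover have "\<exists>y\<in>frontier P. dist x (emb y) = 1" if x: "x \<in> frontier Pplus" "x$3 > 0" for x
  proof -
    have "x \<in> interior {z::real^3. 0 \<le> z$3}" using x(2) by simp
    then obtain p where "p \<in> V" "dist (emb p) x = 1"
      using frontier_Inter_cball_Int_on_sphere[OF \<open>finite V\<close> closed_halfspace_component_ge_cart
          x(1)[unfolded Pplus_def Pbar_def]]
      by blast
    moreover have "p \<in> frontier P" using \<open>p \<in> V\<close> V unfolding corner_point_def by blast
    ultimately show ?thesis by (metis dist_commute)
  qed
  ultimately show ?thesis by auto
qed

end
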